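(* Let $m\ge5$ be odd, $h=\frac{m-1}{2}$, $A=\{1,2,\dots,2^{h-1}-1\}$. For any $i\in A$ and $j\in\Gamma_{(h)}$: (i) $C_{i+2^h}\cap C_{j+2^{h+1}}\neq\emptyset$ only if $(i,j)=(1,1)$; moreover $C_j\cap C_{j+2^{h+1}}=\emptyset$. (ii) $$C_{i+2^h}\cap C_j=\begin{cases}C_j,&\text{if }(i,j)=(2^s i_1,\ i_1+2^{h-s})\text{ for some } i_1\in\Gamma_{(h-1-s)}\text{ and } s\in\{1,2,\dots,h-2\},\\ \emptyset,&\text{otherwise.}\end{cases}$$
   Context: Let $v=2^m-1$. For an integer $i$, $C_i=\{i\cdot 2^s \bmod v: s\ge 0\}$ is the $2$-cyclotomic coset of $i$ modulo $v$. For a positive integer $t$, $\Gamma_{(t)}=\{j:1\le j\le 2^t-1,\ j\text{ odd}\}$. *)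

theory Defs
  imports Main
begin

definition cyc_coset :: "nat \<Rightarrow> nat \<Rightarrow> nat set" where
  "cyc_coset m i = {(i * 2 ^ s) mod (2 ^ m - 1) | s. True}"

definition Gamma :: "nat \<Rightarrow> nat set" where
  "Gamma t = {j. 1 \<le> j \<and> j \<le> 2 ^ t - 1 \<and> odd j}"

end

theory Submission
  imports Defs
begin

text \<open>Since \<open>2^m \<equiv> 1\<close> modulo \<open>v = 2^m - 1\<close>, multiplying by \<open>2^s\<close> and reducing modulo \<open>v\<close> is a
  cyclic rotation of the \<open>m\<close>-bit expansion; two cosets meet only if they coincide, and
  then one representative is a bit rotation of the other. With \<open>m = 2h + 1\<close> the
  representatives \<open>i + 2^h\<close>, \<open>j + 2^(h+1)\<close> and \<open>j\<close> have at most \<open>h + 2\<close> bits, with \<open>j\<close> odd,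
  and comparing the low and high parts of a rotation pins down the few possible
  rotation amounts. In particular \<open>i + 2^h\<close> can only be rotated onto \<open>j\<close> by a plain
  right shift, i.e. when \<open>i + 2^h = 2^s j\<close>.\<close>

lemma pow2_mod_mersenne: "(2::nat) ^ m mod (2 ^ m - 1) = 1 mod (2 ^ m - 1)"
  by (metis mod_add_self1 le_add_diff_inverse2 one_le_power one_le_numeral)

lemma mult_pow2_mod_mersenne:
  "x * 2 ^ n mod (2 ^ m - 1) = x * 2 ^ (n mod m) mod (2 ^ m - (1::nat))"
proof -
  define v :: nat where "v = 2 ^ m - 1"
  have "(2 ^ m) ^ (n div m) mod v = 1 mod v"
    by (metis v_def pow2_mod_mersenne power_mod power_one)
  moreover have "(2::nat) ^ n = 2 ^ (n mod m) * (2 ^ m) ^ (n div m)"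
    by (metis mod_mult_div_eq power_add power_mult)
  ultimately have "x * 2 ^ n mod v = x * 2 ^ (n mod m) * (1 mod v) mod v"
    by (metis mod_mult_right_eq mult.assoc)
  then show ?thesis
    by (simp add: v_def mod_mult_right_eq)
qed

lemma cyc_coset_trans:
  assumes "y \<in> cyc_coset m x" and "z \<in> cyc_coset m y"
  shows "z \<in> cyc_coset m x"
proof -
  obtain s t where "y = x * 2 ^ s mod (2 ^ m - 1)" and "z = y * 2 ^ t mod (2 ^ m - 1)"
    using assms unfolding cyc_coset_def by auto
  then have "z = x * 2 ^ (s + t) mod (2 ^ m - 1)"
    by (simp add: mod_mult_left_eq power_add mult.assoc)
  then show ?thesis
    unfolding cyc_coset_def by auto
qed

lemma cyc_coset_sym:
  assumes "y \<in> cyc_coset m x" and "x < 2 ^ m - 1"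
  shows "x \<in> cyc_coset m y"
proof -
  define v :: nat where "v = 2 ^ m - 1"
  obtain s where y: "y = x * 2 ^ s mod v"
    using assms(1) unfolding cyc_coset_def v_def by auto
  have "0 < m"
    using assms(2) by (cases m) auto
  then have "s + (m - 1) * s = m * s"
    by (cases m) auto
  then have "y * 2 ^ ((m - 1) * s) mod v = x * 2 ^ (m * s) mod v"
    using y by (metis mod_mult_left_eq power_add mult.assoc)
  also have "\<dots> = x * 2 ^ (m * s mod m) mod v"
    unfolding v_def by (rule mult_pow2_mod_mersenne)
  also have "\<dots> = x"
    using assms(2) v_def by simp
  finally show ?thesis
    unfolding cyc_coset_def v_def by (metis (mono_tags, lifting) mem_Collect_eq)
qed

lemma cyc_coset_eq:
  assumes "y \<in> cyc_coset m x" and "x < 2 ^ m - 1"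
  shows "cyc_coset m y = cyc_coset m x"
  using assms cyc_coset_sym cyc_coset_trans by blast

lemma cyc_coset_overlap_imp_mem:
  assumes "cyc_coset m x \<inter> cyc_coset m y \<noteq> {}" and "y < 2 ^ m - 1"
  shows "y \<in> cyc_coset m x"
  using assms cyc_coset_sym cyc_coset_trans by blast

lemma mem_cyc_coset_pow2_mult:
  assumes "x < 2 ^ m - 1" and "s \<le> m"
  shows "x \<in> cyc_coset m (2 ^ s * x)"
proof -
  define v :: nat where "v = 2 ^ m - 1"
  have "2 ^ s * x * 2 ^ (m - s) = x * (2::nat) ^ m"
    using assms(2) by (simp add: power_add[symmetric])
  then have "2 ^ s * x * 2 ^ (m - s) mod v = x * 2 ^ m mod v"
    by (simp only:)
  also have "\<dots> = x * 2 ^ (m mod m) mod v"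
    unfolding v_def by (rule mult_pow2_mod_mersenne)
  also have "\<dots> = x"
    using assms(1) v_def by simp
  finally show ?thesis
    unfolding cyc_coset_def v_def by (metis (mono_tags, lifting) mem_Collect_eq)
qed

text \<open>\<open>y\<close> arises from \<open>x\<close> by moving the top \<open>s\<close> of its \<open>m\<close> bits to the bottom.\<close>

lemma cyc_coset_mem_rotation:
  assumes "y \<in> cyc_coset m x" and "x < 2 ^ m - 1" and "0 < y"
  shows "\<exists>s<m. y mod 2 ^ s = x div 2 ^ (m - s) \<and> y div 2 ^ s = x mod 2 ^ (m - s)"
proof -
  define v :: nat where "v = 2 ^ m - 1"
  have "0 < m"
    using assms(2) by (cases m) auto
  obtain n where "y = x * 2 ^ n mod v"
    using assms(1) unfolding cyc_coset_def v_def by auto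
  then have y: "y = x * 2 ^ s mod v" if "s = n mod m" for s
    using that mult_pow2_mod_mersenne v_def by simp
  define s where "s = n mod m"
  define k where "k = m - s"
  define R where "R = (x mod 2 ^ k) * 2 ^ s + x div 2 ^ k"
  have s: "s < m" and m: "m = k + s"
    using \<open>0 < m\<close> by (auto simp: s_def k_def)
  have "x * 2 ^ s = (x div 2 ^ k) * 2 ^ m + (x mod 2 ^ k) * 2 ^ s"
    by (metis div_mult_mod_eq add_mult_distrib mult.assoc m power_add)
  then have "y = ((x div 2 ^ k) * (2 ^ m mod v) + (x mod 2 ^ k) * 2 ^ s) mod v"
    using y[OF s_def] by (metis mod_add_left_eq mod_mult_right_eq)
  then have yR: "y = R mod v"
    using pow2_mod_mersenne[of m] v_def R_def by (simp add: add.commute mod_add_left_eq)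
  have "x < 2 ^ k * 2 ^ s"
    using assms(2) m by (simp add: power_add)
  then have high: "x div 2 ^ k < 2 ^ s"
    by (simp add: div_less_iff_less_mult mult.commute)
  have "x mod 2 ^ k < 2 ^ k"
    by simp
  then have "x mod 2 ^ k \<le> 2 ^ k - 1"
    by linarith
  then have "(x mod 2 ^ k) * 2 ^ s \<le> (2 ^ k - 1) * 2 ^ s"
    by (rule mult_le_mono1)
  then have "(x mod 2 ^ k) * 2 ^ s \<le> 2 ^ k * 2 ^ s - 2 ^ s"
    by (simp add: diff_mult_distrib)
  moreover have "(2::nat) ^ s \<le> 2 ^ k * 2 ^ s"
    by simp
  ultimately have "R < 2 ^ k * 2 ^ s"
    using high R_def by linarith
  then have "R \<le> v" and "R \<noteq> v"
    using yR assms(3) m v_def by (auto simp: power_add)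
  then have "y = R"
    using yR by simp
  then show ?thesis
    using s high by (auto simp: k_def R_def)
qed

lemma cyc_coset_overlap_imp_rotation:
  assumes "cyc_coset m x \<inter> cyc_coset m y \<noteq> {}"
    and "x < 2 ^ m - 1" and "y < 2 ^ m - 1" and "0 < y"
  shows "\<exists>s<m. y mod 2 ^ s = x div 2 ^ (m - s) \<and> y div 2 ^ s = x mod 2 ^ (m - s)"
  using cyc_coset_mem_rotation cyc_coset_overlap_imp_mem assms by blast

lemma odd_mod_pow2_nonzero:
  assumes "odd (x::nat)" and "0 < n"
  shows "x mod 2 ^ n \<noteq> 0"
proof -
  have "x mod 2 ^ n mod 2 = x mod 2"
    using assms(2) by (simp add: mod_mod_cancel)
  then show ?thesis
    using assms(1) by (metis mod_0 odd_iff_mod_2_eq_one zero_neq_one)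
qed

lemma rotation_odd_target_bound:
  assumes "0 < s" and "odd y" and "y mod 2 ^ s = x div 2 ^ (m - s)"
  shows "2 ^ (m - s) \<le> (x::nat)"
  using odd_mod_pow2_nonzero[OF assms(2,1)] assms(3) by (simp add: div_eq_0_iff not_less)

lemma rotation_odd_source_bound:
  assumes "s < m" and "odd x" and "y div 2 ^ s = x mod 2 ^ (m - s)"
  shows "2 ^ s \<le> (y::nat)"
proof -
  have "y div 2 ^ s \<noteq> 0"
    using odd_mod_pow2_nonzero[OF assms(2), of "m - s"] assms(1,3) by simp
  then show ?thesis
    by (simp add: div_eq_0_iff not_less)
qed

lemma odd_quotient_of_add_pow2:
  fixes i j k h :: nat
  assumes i: "1 \<le> i" "i < 2 ^ (h - 1)" and "odd j" and k: "1 \<le> k" "k \<le> h"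
    and dvd: "2 ^ k dvd i + 2 ^ h" and j: "j = (i + 2 ^ h) div 2 ^ k"
  shows "\<exists>s \<in> {1..h - 2}. \<exists>i1 \<in> Gamma (h - 1 - s). i = 2 ^ s * i1 \<and> j = i1 + 2 ^ (h - s)"
proof -
  have pow_h: "(2::nat) ^ h = 2 ^ k * 2 ^ (h - k)"
    using k by (simp flip: power_add)
  then have "2 ^ k dvd i"
    using dvd by (simp add: dvd_add_left_iff)
  then obtain i1 where i1: "i = 2 ^ k * i1"
    by (rule dvdE)
  then have "i + 2 ^ h = 2 ^ k * (i1 + 2 ^ (h - k))"
    using pow_h by (simp add: algebra_simps)
  then have j_eq: "j = i1 + 2 ^ (h - k)"
    using j by simp
  have "k \<noteq> h"
  proof
    assume "k = h"
    then have "2 ^ h * i1 < 2 ^ h * 1"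
      using i i1 by (simp add: less_le_trans[OF _ power_increasing[of "h - 1" h]])
    then show False
      using i i1 by simp
  qed
  then have "odd i1"
    using j_eq \<open>odd j\<close> k by simp
  then have "1 \<le> i1"
    by (cases i1) auto
  have "(2::nat) ^ (h - 1) = 2 ^ k * 2 ^ (h - 1 - k)"
    using k \<open>k \<noteq> h\<close> by (simp flip: power_add)
  then have i1_lt: "i1 < 2 ^ (h - 1 - k)"
    using i i1 by simp
  then have "k \<le> h - 2"
    using \<open>1 \<le> i1\<close> by (cases "h - 1 - k") auto
  moreover have "i1 \<in> Gamma (h - 1 - k)"
    unfolding Gamma_def using \<open>odd i1\<close> \<open>1 \<le> i1\<close> i1_lt by auto
  ultimately show ?thesis
    using i1 j_eq k by auto
qed

lemma Gamma_memD:
  assumes "j \<in> Gamma t"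
  shows "odd j" and "j < 2 ^ t"
  using assms unfolding Gamma_def by (auto simp: le_diff_conv2 Suc_le_eq)

lemma index_range_memD:
  fixes i :: nat
  assumes "i \<in> {1..2 ^ (t - 1) - 1}"
  shows "1 \<le> i" and "i < 2 ^ (t - 1)" and "i < 2 ^ t"
proof -
  show "1 \<le> i" and i: "i < 2 ^ (t - 1)"
    using assms by (auto simp: le_diff_conv2 Suc_le_eq)
  have "(2::nat) ^ (t - 1) \<le> 2 ^ t"
    by (intro power_increasing) auto
  then show "i < 2 ^ t"
    using i by linarith
qed

subsection \<open>Rotations among the representatives for \<open>m = 2h + 1\<close>\<close>

context
  fixes h m :: nat
  assumes h: "2 \<le> h" and m: "m = 2 * h + 1"
begin

lemma lt_mersenne_if_lt_three_pow:
  fixes x :: nat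
  assumes "x < 3 * 2 ^ h"
  shows "x < 2 ^ m - 1"
proof -
  have "(2::nat) ^ (h + 2) \<le> 2 ^ m"
    using m h by (intro power_increasing) auto
  then show ?thesis
    using assms by simp
qed

lemma rotation_i_pow_h_to_j_pow_Suc_h:
  fixes i j s :: nat
  assumes i: "i < 2 ^ h" and j: "odd j" "j < 2 ^ h" and "s < m"
    and low: "(j + 2 ^ (h + 1)) mod 2 ^ s = (i + 2 ^ h) div 2 ^ (m - s)"
    and high: "(j + 2 ^ (h + 1)) div 2 ^ s = (i + 2 ^ h) mod 2 ^ (m - s)"
  shows "i = 1 \<and> j = 1"
proof -
  have x: "i + 2 ^ h < 2 ^ (h + 1)" and y: "j + 2 ^ (h + 1) < 2 ^ (h + 2)"
    using i j by simp_all
  have "s \<noteq> 0"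
  proof
    assume "s = 0"
    then have "j + 2 ^ (h + 1) \<le> i + 2 ^ h"
      using high by simp
    then show False
      using x by simp
  qed
  then have "2 ^ (m - s) \<le> i + 2 ^ h"
    using j by (intro rotation_odd_target_bound[OF _ _ low]) simp_all
  then have "(2::nat) ^ (m - s) < 2 ^ (h + 1)"
    using x by linarith
  then have "m - s < h + 1"
    by (rule power_less_imp_less_exp[rotated]) simp
  then have "h + 1 \<le> s"
    using m by simp
  moreover have "\<not> h + 2 \<le> s"
  proof
    assume "h + 2 \<le> s"
    then have "(2::nat) ^ (h + 2) \<le> 2 ^ s"
      by (intro power_increasing) auto
    then have "j + 2 ^ (h + 1) = (i + 2 ^ h) div 2 ^ (m - s)"
      using low y by simp
    also have "\<dots> \<le> i + 2 ^ h"
      by (rule div_le_dividend)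
    finally show False
      using x by simp
  qed
  ultimately have "s = h + 1" and "m - s = h"
    using m by auto
  moreover have "(j + 2 ^ (h + 1)) div 2 ^ (h + 1) = 1" and "(j + 2 ^ (h + 1)) mod 2 ^ (h + 1) = j"
    using j by (simp_all add: div_add_self2)
  moreover have "(i + 2 ^ h) div 2 ^ h = 1" and "(i + 2 ^ h) mod 2 ^ h = i"
    using i by (simp_all add: div_add_self2)
  ultimately show ?thesis
    using low high by simp
qed

lemma no_rotation_j_pow_Suc_h_to_j:
  fixes j s :: nat
  assumes j: "odd j" "j < 2 ^ h" and "s < m"
    and low: "j mod 2 ^ s = (j + 2 ^ (h + 1)) div 2 ^ (m - s)"
    and high: "j div 2 ^ s = (j + 2 ^ (h + 1)) mod 2 ^ (m - s)"
  shows False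
proof -
  have x: "j + 2 ^ (h + 1) < 2 ^ (h + 2)"
    using j by simp
  have "s \<noteq> 0"
  proof
    assume "s = 0"
    moreover have "(2::nat) ^ (h + 2) \<le> 2 ^ m"
      using m h by (intro power_increasing) auto
    ultimately show False
      using high x by simp
  qed
  then have "2 ^ (m - s) \<le> j + 2 ^ (h + 1)"
    using j by (intro rotation_odd_target_bound[OF _ _ low]) simp_all
  then have "(2::nat) ^ (m - s) < 2 ^ (h + 2)"
    using x by linarith
  then have "m - s < h + 2"
    by (rule power_less_imp_less_exp[rotated]) simp
  then have "h \<le> s"
    using m by simp
  have "2 ^ s \<le> j"
    using j by (intro rotation_odd_source_bound[OF \<open>s < m\<close> _ high]) simp
  then have "(2::nat) ^ s < 2 ^ h"
    using j by linarith
  then have "s < h"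
    by (rule power_less_imp_less_exp[rotated]) simp
  with \<open>h \<le> s\<close> show False
    by simp
qed

lemma rotation_i_pow_h_to_j:
  fixes i j s :: nat
  assumes i: "i < 2 ^ h" and j: "odd j" "j < 2 ^ h" and "s < m"
    and low: "j mod 2 ^ s = (i + 2 ^ h) div 2 ^ (m - s)"
    and high: "j div 2 ^ s = (i + 2 ^ h) mod 2 ^ (m - s)"
  shows "2 ^ (m - s) dvd i + 2 ^ h \<and> j = (i + 2 ^ h) div 2 ^ (m - s) \<and> m - s \<le> h"
proof -
  have x: "i + 2 ^ h < 2 ^ (h + 1)"
    using i by simp
  have "s \<noteq> 0"
  proof
    assume "s = 0"
    moreover have "(2::nat) ^ (h + 1) \<le> 2 ^ m"
      using m by (intro power_increasing) auto
    ultimately show False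
      using high x j by simp
  qed
  then have "2 ^ (m - s) \<le> i + 2 ^ h"
    using j by (intro rotation_odd_target_bound[OF _ _ low]) simp_all
  then have "(2::nat) ^ (m - s) < 2 ^ (h + 1)"
    using x by linarith
  then have "m - s < h + 1"
    by (rule power_less_imp_less_exp[rotated]) simp
  then have "(2::nat) ^ h \<le> 2 ^ s"
    using m by (intro power_increasing) auto
  then have "j < 2 ^ s"
    using j by linarith
  then show ?thesis
    using low high \<open>m - s < h + 1\<close> by (simp add: mod_eq_0_iff_dvd)
qed

lemma cyc_coset_inter_i_pow_h_j_pow_Suc_h:
  fixes i j :: nat
  assumes i: "i \<in> {1..2 ^ (h - 1) - 1}" and j: "j \<in> Gamma h"
    and overlap: "cyc_coset m (i + 2 ^ h) \<inter> cyc_coset m (j + 2 ^ (h + 1)) \<noteq> {}"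
  shows "(i, j) = (1, 1)"
proof -
  have bounds: "i < 2 ^ h" "odd j" "j < 2 ^ h"
    using index_range_memD[OF i] Gamma_memD[OF j] by auto
  have "i + 2 ^ h < 2 ^ m - 1" and "j + 2 ^ (h + 1) < 2 ^ m - 1"
    by (rule lt_mersenne_if_lt_three_pow, use bounds in simp)+
  then obtain s where "s < m" "(j + 2 ^ (h + 1)) mod 2 ^ s = (i + 2 ^ h) div 2 ^ (m - s)"
      "(j + 2 ^ (h + 1)) div 2 ^ s = (i + 2 ^ h) mod 2 ^ (m - s)"
    using cyc_coset_overlap_imp_rotation[OF overlap] by auto
  then show ?thesis
    using rotation_i_pow_h_to_j_pow_Suc_h bounds by blast
qed

lemma cyc_coset_inter_j_j_pow_Suc_h:
  fixes j :: nat
  assumes "j \<in> Gamma h"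
  shows "cyc_coset m j \<inter> cyc_coset m (j + 2 ^ (h + 1)) = {}"
proof (rule ccontr)
  note j = Gamma_memD[OF assms]
  assume "cyc_coset m j \<inter> cyc_coset m (j + 2 ^ (h + 1)) \<noteq> {}"
  then have "cyc_coset m (j + 2 ^ (h + 1)) \<inter> cyc_coset m j \<noteq> {}"
    by blast
  moreover have "j + 2 ^ (h + 1) < 2 ^ m - 1" and "j < 2 ^ m - 1"
    by (rule lt_mersenne_if_lt_three_pow, use j in simp)+
  moreover have "0 < j"
    using j(1) by (simp add: odd_pos)
  ultimately obtain s where "s < m" "j mod 2 ^ s = (j + 2 ^ (h + 1)) div 2 ^ (m - s)"
      "j div 2 ^ s = (j + 2 ^ (h + 1)) mod 2 ^ (m - s)"
    using cyc_coset_overlap_imp_rotation by blast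
  then show False
    using no_rotation_j_pow_Suc_h_to_j j by blast
qed

lemma cyc_coset_inter_i_pow_h_j:
  fixes i j :: nat
  assumes "i \<in> {1..2 ^ (h - 1) - 1}" and "j \<in> Gamma h"
  shows "cyc_coset m (i + 2 ^ h) \<inter> cyc_coset m j =
    (if \<exists>s \<in> {1..h - 2}. \<exists>i1 \<in> Gamma (h - 1 - s). i = 2 ^ s * i1 \<and> j = i1 + 2 ^ (h - s)
     then cyc_coset m j else {})"
proof -
  note i = index_range_memD[OF assms(1)] and j = Gamma_memD[OF assms(2)]
  have lt: "i + 2 ^ h < 2 ^ m - 1" "j < 2 ^ m - 1"
    by (rule lt_mersenne_if_lt_three_pow, use i(3) j(2) in simp)+
  show ?thesis
  proof (cases "\<exists>s \<in> {1..h - 2}. \<exists>i1 \<in> Gamma (h - 1 - s). i = 2 ^ s * i1 \<and> j = i1 + 2 ^ (h - s)")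
    case True
    then obtain s i1 where s: "s \<in> {1..h - 2}" and ij: "i = 2 ^ s * i1" "j = i1 + 2 ^ (h - s)"
      by blast
    have "s \<le> h"
      using s by auto
    then have "(2::nat) ^ h = 2 ^ s * 2 ^ (h - s)"
      by (simp flip: power_add)
    then have "i + 2 ^ h = 2 ^ s * j"
      using ij by (simp add: algebra_simps)
    moreover have "j \<in> cyc_coset m (2 ^ s * j)"
      using s m lt by (intro mem_cyc_coset_pow2_mult) auto
    ultimately have "j \<in> cyc_coset m (i + 2 ^ h)"
      by simp
    then have "cyc_coset m j = cyc_coset m (i + 2 ^ h)"
      using lt(1) by (rule cyc_coset_eq)
    then show ?thesis
      using True by simp
  next
    case False
    have "cyc_coset m (i + 2 ^ h) \<inter> cyc_coset m j = {}"
    proof (rule ccontr)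
      assume "cyc_coset m (i + 2 ^ h) \<inter> cyc_coset m j \<noteq> {}"
      moreover have "0 < j"
        using j(1) by (simp add: odd_pos)
      ultimately obtain s where "s < m" "j mod 2 ^ s = (i + 2 ^ h) div 2 ^ (m - s)"
          "j div 2 ^ s = (i + 2 ^ h) mod 2 ^ (m - s)"
        using cyc_coset_overlap_imp_rotation lt by blast
      then have "2 ^ (m - s) dvd i + 2 ^ h \<and> j = (i + 2 ^ h) div 2 ^ (m - s) \<and> m - s \<le> h"
        by (rule rotation_i_pow_h_to_j[OF i(3) j])
      moreover have "1 \<le> m - s"
        using \<open>s < m\<close> by simp
      ultimately show False
        using odd_quotient_of_add_pow2[OF i(1,2) j(1), of "m - s"] False by blast
    qed
    then show ?thesis
      unfolding if_not_P[OF False] .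
  qed
qed

end

theorem lemma10:
  fixes m h :: nat
  assumes "m \<ge> 5" and "odd m" and "h = (m - 1) div 2"
  shows "\<forall>i \<in> {1..2 ^ (h - 1) - 1}. \<forall>j \<in> Gamma h.
     (cyc_coset m (i + 2 ^ h) \<inter> cyc_coset m (j + 2 ^ (h + 1)) \<noteq> {} \<longrightarrow> (i, j) = (1, 1))
   \<and> cyc_coset m j \<inter> cyc_coset m (j + 2 ^ (h + 1)) = {}
   \<and> cyc_coset m (i + 2 ^ h) \<inter> cyc_coset m j =
       (if \<exists>s \<in> {1..h - 2}. \<exists>i1 \<in> Gamma (h - 1 - s). i = 2 ^ s * i1 \<and> j = i1 + 2 ^ (h - s)
        then cyc_coset m j else {})"
proof -
  have h: "2 \<le> h" and m: "m = 2 * h + 1"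
    using assms by (auto elim!: oddE)
  show ?thesis
    by (intro ballI conjI impI cyc_coset_inter_i_pow_h_j_pow_Suc_h[OF h m]
        cyc_coset_inter_j_j_pow_Suc_h[OF h m] cyc_coset_inter_i_pow_h_j[OF h m]; assumption)
qed

end
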